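(* Let $X$ be a real Banach space, $\varphi$ a strictly convex increasing function on $[0,\infty)$ with $\varphi(0)=0$, and $r$ a symmetric real random variable with $\|r\|_\infty=1$. Then: (1) A point $x\in S_X$ is an extreme point of $B_X$ if and only if [$y\in X$ and $\mathbb{E}[\varphi(\|x+ry\|)]=\varphi(1)$] implies $y=0$. (2) A point $x\in S_X$ is a strongly extreme point of $B_X$ if and only if for every $\epsilon>0$ there is $\delta>0$ such that $\mathbb{E}[\varphi(\|x+ry\|)]\ge\varphi(1)+\delta$ whenever $\|y\|\ge\epsilon$. (3) $X$ is uniformly convex if and only if $\delta_\varphi(\epsilon)>0$ for every $\epsilon>0$, where $\delta_\varphi(\epsilon)=\inf\{\mathbb{E}[\varphi(\|x+ry\|)]-\varphi(1): x\in S_X,\ \|y\|\ge\epsilon\}$.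
   Context: $S_X$ and $B_X$ are the unit sphere and closed unit ball of $X$. A point $x\in S_X$ is an extreme point of $B_X$ if $\max\{\|x+y\|,\|x-y\|\}=1$ implies $y=0$. It is a strongly extreme point of $B_X$ if for every $\epsilon>0$ there is $\delta>0$ with $\inf\{\max\{\|x+y\|,\|x-y\|\}:\|y\|\ge\epsilon\}\ge1+\delta$. $X$ is uniformly convex if for every $\epsilon>0$ there is $\delta>0$ with $\inf\{\max\{\|x+y\|,\|x-y\|\}:\|y\|\ge\epsilon,\|x\|=1\}\ge1+\delta$. $\varphi$ strictly convex means $\varphi(\frac{s+t}{2})<\frac{\varphi(s)+\varphi(t)}{2}$ for distinct $s,t$. A random variable is symmetric if $r$ and $-r$ have the same distribution. *)

theory Defs
  imports "HOL-Probability.Probability"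
begin

definition strictly_convex_nonneg :: "(real \<Rightarrow> real) \<Rightarrow> bool" where
  "strictly_convex_nonneg \<phi> \<longleftrightarrow>
     (\<forall>s\<ge>0. \<forall>t\<ge>0. s \<noteq> t \<longrightarrow> \<phi> ((s + t) / 2) < (\<phi> s + \<phi> t) / 2)"

definition extreme_point_ball :: "'a::real_normed_vector \<Rightarrow> bool" where
  "extreme_point_ball x \<longleftrightarrow> norm x = 1 \<and>
     (\<forall>y. max (norm (x + y)) (norm (x - y)) = 1 \<longrightarrow> y = 0)"

definition strongly_extreme_point_ball :: "'a::real_normed_vector \<Rightarrow> bool" where
  "strongly_extreme_point_ball x \<longleftrightarrow> norm x = 1 \<and>
     (\<forall>\<epsilon>>0. \<exists>\<delta>>0. \<forall>y. norm y \<ge> \<epsilon> \<longrightarrow> max (norm (x + y)) (norm (x - y)) \<ge> 1 + \<delta>)"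

definition uniformly_convex :: "'a::real_normed_vector itself \<Rightarrow> bool" where
  "uniformly_convex _ \<longleftrightarrow>
     (\<forall>\<epsilon>>0. \<exists>\<delta>>0. \<forall>x y::'a. norm x = 1 \<and> norm y \<ge> \<epsilon> \<longrightarrow>
         max (norm (x + y)) (norm (x - y)) \<ge> 1 + \<delta>)"

definition exp_phi :: "'b measure \<Rightarrow> ('b \<Rightarrow> real) \<Rightarrow> (real \<Rightarrow> real) \<Rightarrow> 'a::real_normed_vector \<Rightarrow> 'a \<Rightarrow> real" where
  "exp_phi M r \<phi> x y = (\<integral>\<omega>. \<phi> (norm (x + r \<omega> *\<^sub>R y)) \<partial>M)"

text \<open>The modulus \<open>\<delta>_\<phi>(\<epsilon>)\<close>, taken in the extended reals (infimum of the empty set is \<infinity>).\<close>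
definition delta_phi :: "'b measure \<Rightarrow> ('b \<Rightarrow> real) \<Rightarrow> (real \<Rightarrow> real) \<Rightarrow> 'a::real_normed_vector itself \<Rightarrow> real \<Rightarrow> ereal" where
  "delta_phi M r \<phi> _ \<epsilon> =
     (INF p \<in> {(x::'a, y). norm x = 1 \<and> norm y \<ge> \<epsilon>}. ereal (exp_phi M r \<phi> (fst p) (snd p) - \<phi> 1))"

end

theory Submission
  imports Defs
begin

text \<open>By symmetry of \<open>r\<close>, \<open>E[\<phi>(\<parallel>x + r y\<parallel>)]\<close> is the expectation of
\<open>(\<phi>(\<parallel>x + r y\<parallel>) + \<phi>(\<parallel>x - r y\<parallel>))/2\<close>. As \<open>\<parallel>x + z\<parallel> + \<parallel>x - z\<parallel> \<ge> 2\<close> for \<open>\<parallel>x\<parallel> = 1\<close>,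
convexity and monotonicity of \<open>\<phi>\<close> make this integrand at least \<open>\<phi>(1)\<close>, and at least
\<open>\<phi>(1) + g(d)\<close> with \<open>g(d) = (\<phi>(1+d) + \<phi>(1-d))/2 - \<phi>(1) > 0\<close> whenever
\<open>max(\<parallel>x + z\<parallel>, \<parallel>x - z\<parallel>) \<ge> 1 + d\<close>. On the event \<open>|r| > 1/2\<close>, which has positive probability
because \<open>\<parallel>r\<parallel>\<^sub>\<infinity> = 1\<close>, this turns a lower bound on \<open>max(\<parallel>x + y\<parallel>, \<parallel>x - y\<parallel>)\<close> into one on the
expectation. Conversely \<open>|r| \<le> 1\<close> a.s. and \<open>\<parallel>x + t y\<parallel> \<le> max(\<parallel>x + y\<parallel>, \<parallel>x - y\<parallel>)\<close> for
\<open>|t| \<le> 1\<close> bound the expectation by \<open>\<phi>(max(\<parallel>x + y\<parallel>, \<parallel>x - y\<parallel>))\<close>, and continuity of \<open>\<phi>\<close>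
at \<open>1\<close> transfers a lower bound on the expectation back to the norms. Convexity of \<open>\<phi>\<close>
itself follows from midpoint convexity and monotonicity by dyadic approximation.\<close>

lemma midpoint_convex_dyadic:
  fixes f :: "real \<Rightarrow> real"
  assumes S: "convex S"
    and mid: "\<And>s t. s \<in> S \<Longrightarrow> t \<in> S \<Longrightarrow> f ((s + t) / 2) \<le> (f s + f t) / 2"
    and xy: "x \<in> S" "y \<in> S"
  shows "k \<le> 2 ^ n \<Longrightarrow>
    f ((1 - real k / 2 ^ n) * x + (real k / 2 ^ n) * y) \<le> (1 - real k / 2 ^ n) * f x + (real k / 2 ^ n) * f y"
proof (induction n arbitrary: k)
  case 0
  then have "k = 0 \<or> k = 1" by auto
  then show ?case by auto
next
  case (Suc n)
  define u where "u i = real i / 2 ^ n" for i :: nat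
  have u: "0 \<le> u i" "u i \<le> 1" if "i \<le> 2 ^ n" for i
    using that by (auto simp: u_def field_simps)
  have in_S: "(1 - u i) * x + u i * y \<in> S" if "i \<le> 2 ^ n" for i
    using convexD[OF S xy, of "1 - u i" "u i"] u[OF that] by simp
  show ?case
  proof (cases "even k")
    case True
    then obtain j where "k = 2 * j" by blast
    with Suc.IH[of j] Suc.prems show ?thesis by simp
  next
    case False
    then obtain j where j: "k = 2 * j + 1" by (rule oddE)
    with Suc.prems have j1: "j + 1 \<le> 2 ^ n" by simp
    have "real k / 2 ^ Suc n = (u j + u (j + 1)) / 2"
      by (simp add: u_def j field_simps)
    then have "f ((1 - real k / 2 ^ Suc n) * x + (real k / 2 ^ Suc n) * y)
        = f ((((1 - u j) * x + u j * y) + ((1 - u (j + 1)) * x + u (j + 1) * y)) / 2)"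
      by (intro arg_cong[where f = f]) (simp add: field_simps)
    also have "\<dots> \<le> (f ((1 - u j) * x + u j * y) + f ((1 - u (j + 1)) * x + u (j + 1) * y)) / 2"
      using j1 by (intro mid in_S) auto
    also have "\<dots> \<le> (((1 - u j) * f x + u j * f y) + ((1 - u (j + 1)) * f x + u (j + 1) * f y)) / 2"
      unfolding u_def using j1 by (intro divide_right_mono add_mono Suc.IH) auto
    also have "\<dots> = (1 - real k / 2 ^ Suc n) * f x + (real k / 2 ^ Suc n) * f y"
      by (simp add: u_def j field_simps)
    finally show ?thesis .
  qed
qed

lemma mono_midpoint_convex_imp_convex_on:
  fixes f :: "real \<Rightarrow> real"
  assumes S: "convex S" and mono: "mono_on S f"
    and mid: "\<And>s t. s \<in> S \<Longrightarrow> t \<in> S \<Longrightarrow> f ((s + t) / 2) \<le> (f s + f t) / 2"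
  shows "convex_on S f"
proof (rule convex_on_linorderI[OF _ S])
  fix t x y :: real assume t: "0 < t" "t < 1" and xy: "x \<in> S" "y \<in> S" "x < y"
  have fxy: "f x \<le> f y" using mono xy by (auto simp: mono_on_def)
  show "f ((1 - t) *\<^sub>R x + t *\<^sub>R y) \<le> (1 - t) * f x + t * f y"
  proof (rule field_le_epsilon)
    fix e :: real assume e: "0 < e"
    obtain n where n: "(1/2) ^ n < e / (f y - f x + 1)"
      using real_arch_pow_inv[of "e / (f y - f x + 1)" "1/2"] e fxy by auto
    define k where "k = nat \<lceil>t * 2 ^ n\<rceil>"
    define u where "u = real k / 2 ^ n"
    have k: "t * 2 ^ n \<le> real k" "real k < t * 2 ^ n + 1"
      using t by (auto simp: k_def) linarith+
    have "real k \<le> 2 ^ n"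
      using t by (simp add: k_def ceiling_le_iff)
    then have k_le: "k \<le> 2 ^ n" by (metis of_nat_le_iff of_nat_numeral of_nat_power)
    have u: "t \<le> u" "u \<le> t + (1/2) ^ n" "u \<le> 1"
      using k \<open>real k \<le> 2 ^ n\<close> by (auto simp: u_def field_simps)
    have in_S: "(1 - s) * x + s * y \<in> S" if "0 \<le> s" "s \<le> 1" for s
      using convexD[OF S xy(1,2), of "1 - s" s] that by simp
    have "f ((1 - t) * x + t * y) \<le> f ((1 - u) * x + u * y)"
    proof -
      have "(1 - t) * x + t * y \<le> (1 - u) * x + u * y"
        using mult_nonneg_nonneg[of "u - t" "y - x"] u xy by (simp add: algebra_simps)
      then show ?thesis
        using mono in_S t u by (auto simp: mono_on_def)
    qed
    also have "\<dots> \<le> (1 - u) * f x + u * f y"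
      unfolding u_def using midpoint_convex_dyadic[OF S mid xy(1,2) k_le] by simp
    also have "\<dots> \<le> (1 - t) * f x + t * f y + (1/2) ^ n * (f y - f x)"
      using mult_right_mono[of "u - t" "(1/2) ^ n" "f y - f x"] u fxy by (simp add: algebra_simps)
    also have "\<dots> \<le> (1 - t) * f x + t * f y + e"
    proof -
      have "(1/2) ^ n * (f y - f x) \<le> (1/2) ^ n * (f y - f x + 1)" by simp
      also have "\<dots> \<le> e" using n fxy by (simp add: field_simps)
      finally show ?thesis by simp
    qed
    finally show "f ((1 - t) *\<^sub>R x + t *\<^sub>R y) \<le> (1 - t) * f x + t * f y + e" by simp
  qed
qed

locale strictly_convex_increasing =
  fixes \<phi> :: "real \<Rightarrow> real"
  assumes strictly_convex: "strictly_convex_nonneg \<phi>"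
    and increasing: "mono_on {0..} \<phi>"
begin

lemma phi_mono: "0 \<le> s \<Longrightarrow> s \<le> t \<Longrightarrow> \<phi> s \<le> \<phi> t"
  using increasing by (auto simp: mono_on_def)

lemma phi_midpoint_le: "0 \<le> s \<Longrightarrow> 0 \<le> t \<Longrightarrow> \<phi> ((s + t) / 2) \<le> (\<phi> s + \<phi> t) / 2"
  using strictly_convex unfolding strictly_convex_nonneg_def by (cases "s = t") force+

lemma convex_on_phi: "convex_on {0..} \<phi>"
  using phi_midpoint_le by (intro mono_midpoint_convex_imp_convex_on increasing) auto

lemma isCont_phi:
  assumes "0 < s" shows "isCont \<phi> s"
proof -
  have "continuous_on {0<..} \<phi>"
    by (rule convex_on_continuous) (auto intro: convex_on_subset[OF convex_on_phi])
  with assms show ?thesis by (simp add: continuous_on_eq_continuous_at)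
qed

lemma exists_phi_one_plus_less:
  assumes "0 < e" shows "\<exists>\<eta>>0. \<phi> (1 + \<eta>) < \<phi> 1 + e"
proof -
  obtain d where "0 < d" "\<forall>s. dist s 1 < d \<longrightarrow> dist (\<phi> s) (\<phi> 1) < e"
    using assms isCont_phi[of 1] unfolding continuous_at_eps_delta by auto
  then have "\<bar>\<phi> (1 + d / 2) - \<phi> 1\<bar> < e" by (auto simp: dist_real_def)
  with \<open>0 < d\<close> show ?thesis by (intro exI[of _ "d / 2"]) auto
qed

definition convexity_gap :: "real \<Rightarrow> real" where
  "convexity_gap d = (\<phi> (1 + d) + \<phi> (1 - d)) / 2 - \<phi> 1"

lemma convexity_gap_pos: "0 < d \<Longrightarrow> d \<le> 1 \<Longrightarrow> 0 < convexity_gap d"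
  using strictly_convex unfolding strictly_convex_nonneg_def convexity_gap_def
  by (force dest: spec[of _ "1 + d"] spec[of _ "1 - d"])

lemma convexity_gap_mono:
  assumes "0 < d" "d \<le> s" "s \<le> 1"
  shows "convexity_gap d \<le> convexity_gap s"
proof -
  define l where "l = d / s"
  have l: "0 \<le> l" "l \<le> 1" "d = l * s" using assms by (auto simp: l_def)
  have "\<phi> ((1 - l) * 1 + l * (1 + s)) \<le> (1 - l) * \<phi> 1 + l * \<phi> (1 + s)"
    "\<phi> ((1 - l) * 1 + l * (1 - s)) \<le> (1 - l) * \<phi> 1 + l * \<phi> (1 - s)"
    using convex_onD[OF convex_on_phi, of l 1 "1 + s"] convex_onD[OF convex_on_phi, of l 1 "1 - s"] l assms
    by auto
  then have "convexity_gap d \<le> l * convexity_gap s"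
    unfolding convexity_gap_def l(3) by (simp add: field_simps)
  also have "\<dots> \<le> convexity_gap s"
    using l assms convexity_gap_pos[of s] by (simp add: mult_left_le_one_le)
  finally show ?thesis .
qed

lemma phi_one_le_mean:
  assumes "0 \<le> a" "0 \<le> b" "2 \<le> a + b"
  shows "\<phi> 1 \<le> (\<phi> a + \<phi> b) / 2"
proof -
  have "\<phi> 1 \<le> \<phi> ((a + b) / 2)" using assms by (intro phi_mono) auto
  also have "\<dots> \<le> (\<phi> a + \<phi> b) / 2" using assms by (intro phi_midpoint_le)
  finally show ?thesis .
qed

lemma phi_one_plus_gap_le_mean:
  assumes "0 \<le> a" "0 \<le> b" "2 \<le> a + b" and d: "0 < d" "d \<le> 1" and "1 + d \<le> max a b"
  shows "\<phi> 1 + convexity_gap d \<le> (\<phi> a + \<phi> b) / 2"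
proof -
  have *: "\<phi> 1 + convexity_gap d \<le> (\<phi> a + \<phi> b) / 2"
    if "0 \<le> b" "2 \<le> a + b" "1 + d \<le> a" for a b
  proof (cases "1 - d \<le> b")
    case True
    then show ?thesis
      using that d phi_mono[of "1 + d" a] phi_mono[of "1 - d" b] by (simp add: convexity_gap_def)
  next
    case False
    then have "convexity_gap d \<le> convexity_gap (1 - b)"
      using that d by (intro convexity_gap_mono) auto
    moreover have "\<phi> (1 + (1 - b)) \<le> \<phi> a" using False that d by (intro phi_mono) auto
    ultimately show ?thesis by (simp add: convexity_gap_def)
  qed
  show ?thesis using *[of b a] *[of a b] assms by (auto simp: max_def add.commute split: if_splits)
qed

end

lemma norm_add_scaleR_le_max:
  fixes x y :: "'a::real_normed_vector"
  assumes "\<bar>t\<bar> \<le> 1"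
  shows "norm (x + t *\<^sub>R y) \<le> max (norm (x + y)) (norm (x - y))"
proof -
  have "((1 + t) / 2) *\<^sub>R (x + y) + ((1 - t) / 2) *\<^sub>R (x - y)
      = ((1 + t) / 2 + (1 - t) / 2) *\<^sub>R x + ((1 + t) / 2 - (1 - t) / 2) *\<^sub>R y"
    by (simp add: algebra_simps)
  then have "x + t *\<^sub>R y = ((1 + t) / 2) *\<^sub>R (x + y) + ((1 - t) / 2) *\<^sub>R (x - y)"
    by (simp add: field_simps)
  then have "norm (x + t *\<^sub>R y) \<le> ((1 + t) / 2) * norm (x + y) + ((1 - t) / 2) * norm (x - y)"
    using assms norm_triangle_ineq[of "((1 + t) / 2) *\<^sub>R (x + y)" "((1 - t) / 2) *\<^sub>R (x - y)"]
    by simp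
  also have "\<dots> \<le> max (norm (x + y)) (norm (x - y))"
    using assms by (intro convex_bound_le) (auto simp: add_divide_distrib[symmetric])
  finally show ?thesis .
qed

lemma two_le_norm_add_plus_norm_diff:
  fixes x y :: "'a::real_normed_vector"
  assumes "norm x = 1"
  shows "2 \<le> norm (x + y) + norm (x - y)"
  using norm_triangle_ineq[of "x + y" "x - y"] assms by (simp add: scaleR_2[symmetric])

locale symmetric_phi_average = strictly_convex_increasing \<phi> + prob_space M
  for \<phi> :: "real \<Rightarrow> real" and M :: "'b measure" +
  fixes r :: "'b \<Rightarrow> real"
  assumes r_measurable[measurable]: "r \<in> borel_measurable M"
    and r_symmetric: "distr M borel r = distr M borel (\<lambda>\<omega>. - r \<omega>)"
    and esssup_abs_r: "esssup M (\<lambda>\<omega>. ereal \<bar>r \<omega>\<bar>) = 1"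
    and phi_zero: "\<phi> 0 = 0"
begin

lemma AE_abs_r_le_one: "AE \<omega> in M. \<bar>r \<omega>\<bar> \<le> 1"
  using esssup_AE[of "\<lambda>\<omega>. ereal \<bar>r \<omega>\<bar>" M] esssup_abs_r by simp

lemma emeasure_abs_r_gt_half_pos: "0 < emeasure M {\<omega> \<in> space M. 1/2 < \<bar>r \<omega>\<bar>}"
  using esssup_pos_measure[of "\<lambda>\<omega>. ereal \<bar>r \<omega>\<bar>" M "ereal (1/2)"] esssup_abs_r by simp

lemma phi_norm_borel: "(\<lambda>t. \<phi> (norm (x + t *\<^sub>R y))) \<in> borel_measurable borel"
proof -
  \<comment> \<open>\<open>\<phi>\<close> is only monotone on \<open>[0,\<infinity>)\<close>; extend it monotonically to all of \<open>\<real>\<close>.\<close>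
  have "mono (\<lambda>s. \<phi> (max s 0))" by (intro monoI phi_mono) auto
  then have "(\<lambda>s. \<phi> (max s 0)) \<in> borel_measurable borel" by (rule borel_measurable_mono)
  moreover have "(\<lambda>t. norm (x + t *\<^sub>R y)) \<in> borel_measurable borel"
    by (intro borel_measurable_continuous_onI continuous_intros)
  ultimately have "(\<lambda>t. \<phi> (max (norm (x + t *\<^sub>R y)) 0)) \<in> borel_measurable borel"
    by (rule measurable_compose[rotated])
  then show ?thesis by simp
qed

lemma integrable_phi_norm: "integrable M (\<lambda>\<omega>. \<phi> (norm (x + r \<omega> *\<^sub>R y)))"
proof (rule integrable_const_bound[where B = "\<phi> (norm x + norm y)"])
  show "AE \<omega> in M. norm (\<phi> (norm (x + r \<omega> *\<^sub>R y))) \<le> \<phi> (norm x + norm y)"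
    using AE_abs_r_le_one
  proof eventually_elim
    case (elim \<omega>)
    have "norm (x + r \<omega> *\<^sub>R y) \<le> norm x + \<bar>r \<omega>\<bar> * norm y"
      using norm_triangle_ineq[of x "r \<omega> *\<^sub>R y"] by simp
    also have "\<dots> \<le> norm x + norm y" using elim by (simp add: mult_left_le_one_le)
    finally have "\<phi> (norm (x + r \<omega> *\<^sub>R y)) \<le> \<phi> (norm x + norm y)" by (simp add: phi_mono)
    moreover have "0 \<le> \<phi> (norm (x + r \<omega> *\<^sub>R y))"
      using phi_mono[of 0 "norm (x + r \<omega> *\<^sub>R y)"] phi_zero by simp
    ultimately show ?case by simp
  qed
qed (rule measurable_compose[OF r_measurable phi_norm_borel])

definition symmetrized_phi :: "'a::real_normed_vector \<Rightarrow> 'a \<Rightarrow> real \<Rightarrow> real" where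
  "symmetrized_phi x y t = (\<phi> (norm (x + t *\<^sub>R y)) + \<phi> (norm (x - t *\<^sub>R y))) / 2"

lemma integrable_symmetrized_phi: "integrable M (\<lambda>\<omega>. symmetrized_phi x y (r \<omega>))"
  unfolding symmetrized_phi_def
  using integrable_phi_norm[of x y] integrable_phi_norm[of x "- y"] by simp

lemma exp_phi_symmetrized: "exp_phi M r \<phi> x y = (\<integral>\<omega>. symmetrized_phi x y (r \<omega>) \<partial>M)"
proof -
  have "exp_phi M r \<phi> x y = integral\<^sup>L (distr M borel r) (\<lambda>t. \<phi> (norm (x + t *\<^sub>R y)))"
    unfolding exp_phi_def by (rule integral_distr[symmetric, OF r_measurable phi_norm_borel])
  also have "\<dots> = integral\<^sup>L (distr M borel (\<lambda>\<omega>. - r \<omega>)) (\<lambda>t. \<phi> (norm (x + t *\<^sub>R y)))"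
    by (simp add: r_symmetric)
  also have "\<dots> = (\<integral>\<omega>. \<phi> (norm (x - r \<omega> *\<^sub>R y)) \<partial>M)"
    by (subst integral_distr) (auto intro: phi_norm_borel)
  finally have "exp_phi M r \<phi> x y = (\<integral>\<omega>. \<phi> (norm (x - r \<omega> *\<^sub>R y)) \<partial>M)" .
  then show ?thesis
    unfolding symmetrized_phi_def exp_phi_def
    using integrable_phi_norm[of x y] integrable_phi_norm[of x "- y"] by simp
qed

lemma phi_one_le_symmetrized_phi: "norm x = 1 \<Longrightarrow> \<phi> 1 \<le> symmetrized_phi x y t"
  unfolding symmetrized_phi_def
  by (intro phi_one_le_mean two_le_norm_add_plus_norm_diff) auto

lemma phi_one_plus_gap_le_symmetrized_phi:
  assumes "norm x = 1" "0 < d" "d \<le> 1" "1 + d \<le> max (norm (x + t *\<^sub>R y)) (norm (x - t *\<^sub>R y))"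
  shows "\<phi> 1 + convexity_gap d \<le> symmetrized_phi x y t"
  unfolding symmetrized_phi_def
  using assms two_le_norm_add_plus_norm_diff[of x "t *\<^sub>R y"] by (intro phi_one_plus_gap_le_mean) auto

lemma phi_one_le_exp_phi:
  assumes "norm x = 1" shows "\<phi> 1 \<le> exp_phi M r \<phi> x y"
proof -
  have "(\<integral>\<omega>. \<phi> 1 \<partial>M) \<le> (\<integral>\<omega>. symmetrized_phi x y (r \<omega>) \<partial>M)"
    using assms phi_one_le_symmetrized_phi
    by (intro integral_mono integrable_symmetrized_phi) auto
  then show ?thesis by (simp add: exp_phi_symmetrized prob_space)
qed

lemma exp_phi_le_phi_of_max_norm_le:
  assumes "max (norm (x + y)) (norm (x - y)) \<le> c"
  shows "exp_phi M r \<phi> x y \<le> \<phi> c"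
proof -
  have "AE \<omega> in M. \<phi> (norm (x + r \<omega> *\<^sub>R y)) \<le> \<phi> c"
    using AE_abs_r_le_one
  proof eventually_elim
    case (elim \<omega>)
    show ?case using norm_add_scaleR_le_max[OF elim, of x y] assms by (intro phi_mono) auto
  qed
  then have "exp_phi M r \<phi> x y \<le> (\<integral>\<omega>. \<phi> c \<partial>M)"
    unfolding exp_phi_def by (intro integral_mono_AE integrable_phi_norm) auto
  then show ?thesis by (simp add: prob_space)
qed


definition gain :: "real \<Rightarrow> real" where
  "gain \<delta> = convexity_gap (min \<delta> 1) * prob {\<omega> \<in> space M. 1/2 < \<bar>r \<omega>\<bar>}"

lemma gain_pos: "0 < \<delta> \<Longrightarrow> 0 < gain \<delta>"
  unfolding gain_def using convexity_gap_pos[of "min \<delta> 1"] emeasure_abs_r_gt_half_pos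
  by (simp add: emeasure_eq_measure)

lemma phi_one_plus_gain_le_exp_phi:
  fixes x y :: "'a::real_normed_vector"
  assumes x: "norm x = 1" and \<delta>: "0 < \<delta>" and y: "e \<le> norm y"
    and max_ge: "\<And>z::'a. e / 2 \<le> norm z \<Longrightarrow> 1 + \<delta> \<le> max (norm (x + z)) (norm (x - z))"
  shows "\<phi> 1 + gain \<delta> \<le> exp_phi M r \<phi> x y"
proof -
  define A where "A = {\<omega> \<in> space M. 1/2 < \<bar>r \<omega>\<bar>}"
  have A: "A \<in> sets M" unfolding A_def by measurable
  have "\<phi> 1 + convexity_gap (min \<delta> 1) * indicator A \<omega> \<le> symmetrized_phi x y (r \<omega>)" for \<omega>
  proof (cases "\<omega> \<in> A")
    case True
    then have "e / 2 \<le> \<bar>r \<omega>\<bar> * norm y"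
      using y mult_right_mono[of "1/2" "\<bar>r \<omega>\<bar>" "norm y"] by (simp add: A_def)
    then have "1 + min \<delta> 1 \<le> max (norm (x + r \<omega> *\<^sub>R y)) (norm (x - r \<omega> *\<^sub>R y))"
      using max_ge[of "r \<omega> *\<^sub>R y"] by simp
    then show ?thesis
      using True phi_one_plus_gap_le_symmetrized_phi[OF x, of "min \<delta> 1"] \<delta> by simp
  next
    case False
    then show ?thesis using phi_one_le_symmetrized_phi[OF x] by simp
  qed
  then have "(\<integral>\<omega>. \<phi> 1 + convexity_gap (min \<delta> 1) * indicator A \<omega> \<partial>M)
      \<le> (\<integral>\<omega>. symmetrized_phi x y (r \<omega>) \<partial>M)"
    using A by (intro integral_mono integrable_symmetrized_phi Bochner_Integration.integrable_add
        integrable_mult_right integrable_real_indicator) (auto simp: less_top[symmetric])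
  moreover have "(\<integral>\<omega>. \<phi> 1 + convexity_gap (min \<delta> 1) * indicator A \<omega> \<partial>M) = \<phi> 1 + gain \<delta>"
    using A by (subst Bochner_Integration.integral_add)
      (auto simp: gain_def A_def prob_space less_top[symmetric] intro!: integrable_real_indicator)
  ultimately show ?thesis by (simp add: exp_phi_symmetrized)
qed

lemma max_norm_ge_of_exp_phi_ge:
  assumes "\<phi> 1 + c \<le> exp_phi M r \<phi> x y" "\<phi> (1 + \<eta>) < \<phi> 1 + c"
  shows "1 + \<eta> \<le> max (norm (x + y)) (norm (x - y))"
  using exp_phi_le_phi_of_max_norm_le[of x y "1 + \<eta>"] assms by fastforce

lemma max_norm_eq_one_of_symmetrized_phi_eq:
  assumes x: "norm x = 1" and eq: "symmetrized_phi x y t = \<phi> 1"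
  shows "max (norm (x + t *\<^sub>R y)) (norm (x - t *\<^sub>R y)) = 1"
proof (rule ccontr)
  define m where "m = max (norm (x + t *\<^sub>R y)) (norm (x - t *\<^sub>R y))"
  assume "\<not> ?thesis"
  then have "1 < m"
    using two_le_norm_add_plus_norm_diff[OF x, of "t *\<^sub>R y"] by (auto simp: m_def)
  then have "\<phi> 1 + convexity_gap (min (m - 1) 1) \<le> symmetrized_phi x y t"
    by (intro phi_one_plus_gap_le_symmetrized_phi[OF x]) (auto simp: m_def)
  with eq convexity_gap_pos[of "min (m - 1) 1"] \<open>1 < m\<close> show False by simp
qed

lemma extreme_point_ball_iff_exp_phi:
  fixes x :: "'a::real_normed_vector"
  assumes x: "norm x = 1"
  shows "extreme_point_ball x \<longleftrightarrow> (\<forall>y. exp_phi M r \<phi> x y = \<phi> 1 \<longrightarrow> y = 0)"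
proof
  assume extreme: "extreme_point_ball x"
  show "\<forall>y. exp_phi M r \<phi> x y = \<phi> 1 \<longrightarrow> y = 0"
  proof (intro allI impI)
    fix y :: 'a assume "exp_phi M r \<phi> x y = \<phi> 1"
    then have "(\<integral>\<omega>. symmetrized_phi x y (r \<omega>) - \<phi> 1 \<partial>M) = 0"
      by (simp add: exp_phi_symmetrized integrable_symmetrized_phi prob_space)
    then have AE_eq: "AE \<omega> in M. symmetrized_phi x y (r \<omega>) - \<phi> 1 = 0"
      using phi_one_le_symmetrized_phi[OF x]
      by (subst (asm) integral_nonneg_eq_0_iff_AE) (auto intro: integrable_symmetrized_phi)
    have "\<exists>\<omega>\<in>space M. symmetrized_phi x y (r \<omega>) = \<phi> 1 \<and> 1/2 < \<bar>r \<omega>\<bar>"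
    proof (rule ccontr)
      assume none: "\<not> ?thesis"
      have "AE \<omega> in M. \<not> 1/2 < \<bar>r \<omega>\<bar>"
        using AE_space AE_eq by eventually_elim (use none in auto)
      then show False
        using emeasure_eq_0_AE emeasure_abs_r_gt_half_pos by fastforce
    qed
    then obtain t where t: "symmetrized_phi x y t = \<phi> 1" "t \<noteq> 0" by force
    then have "t *\<^sub>R y = 0"
      using extreme max_norm_eq_one_of_symmetrized_phi_eq[OF x t(1)]
      unfolding extreme_point_ball_def by blast
    with t(2) show "y = 0" by simp
  qed
next
  assume "\<forall>y. exp_phi M r \<phi> x y = \<phi> 1 \<longrightarrow> y = 0"
  then show "extreme_point_ball x"
    using x phi_one_le_exp_phi exp_phi_le_phi_of_max_norm_le
    unfolding extreme_point_ball_def by (metis order.refl order_antisym)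
qed

lemma strongly_extreme_point_ball_iff_exp_phi:
  fixes x :: "'a::real_normed_vector"
  assumes x: "norm x = 1"
  shows "strongly_extreme_point_ball x \<longleftrightarrow>
    (\<forall>\<epsilon>>0. \<exists>\<delta>>0. \<forall>y. norm y \<ge> \<epsilon> \<longrightarrow> exp_phi M r \<phi> x y \<ge> \<phi> 1 + \<delta>)"
proof
  assume strongly_extreme: "strongly_extreme_point_ball x"
  show "\<forall>\<epsilon>>0. \<exists>\<delta>>0. \<forall>y. norm y \<ge> \<epsilon> \<longrightarrow> exp_phi M r \<phi> x y \<ge> \<phi> 1 + \<delta>"
  proof (intro allI impI)
    fix \<epsilon> :: real assume "0 < \<epsilon>"
    then obtain \<delta> where "0 < \<delta>"
      and "\<forall>z. \<epsilon> / 2 \<le> norm z \<longrightarrow> 1 + \<delta> \<le> max (norm (x + z)) (norm (x - z))"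
      using strongly_extreme unfolding strongly_extreme_point_ball_def by (meson half_gt_zero)
    then show "\<exists>\<delta>>0. \<forall>y. norm y \<ge> \<epsilon> \<longrightarrow> exp_phi M r \<phi> x y \<ge> \<phi> 1 + \<delta>"
      using gain_pos phi_one_plus_gain_le_exp_phi[OF x] by blast
  qed
next
  assume exp_ge: "\<forall>\<epsilon>>0. \<exists>\<delta>>0. \<forall>y. norm y \<ge> \<epsilon> \<longrightarrow> exp_phi M r \<phi> x y \<ge> \<phi> 1 + \<delta>"
  show "strongly_extreme_point_ball x"
    unfolding strongly_extreme_point_ball_def
  proof (intro conjI allI impI x)
    fix \<epsilon> :: real assume "0 < \<epsilon>"
    with exp_ge obtain c where "0 < c" and c: "\<forall>y. \<epsilon> \<le> norm y \<longrightarrow> \<phi> 1 + c \<le> exp_phi M r \<phi> x y"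
      by blast
    then obtain \<eta> where "0 < \<eta>" "\<phi> (1 + \<eta>) < \<phi> 1 + c"
      using exists_phi_one_plus_less by blast
    then show "\<exists>\<delta>>0. \<forall>y. \<epsilon> \<le> norm y \<longrightarrow> 1 + \<delta> \<le> max (norm (x + y)) (norm (x - y))"
      using c max_norm_ge_of_exp_phi_ge by blast
  qed
qed

lemma uniformly_convex_iff_delta_phi_pos:
  "uniformly_convex TYPE('a::real_normed_vector) \<longleftrightarrow> (\<forall>\<epsilon>>0. delta_phi M r \<phi> TYPE('a) \<epsilon> > 0)"
proof
  assume uc: "uniformly_convex TYPE('a)"
  show "\<forall>\<epsilon>>0. delta_phi M r \<phi> TYPE('a) \<epsilon> > 0"
  proof (intro allI impI)
    fix \<epsilon> :: real assume "0 < \<epsilon>"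
    then obtain \<delta> where "0 < \<delta>" and \<delta>: "\<forall>x y::'a. norm x = 1 \<and> \<epsilon> / 2 \<le> norm y \<longrightarrow>
        1 + \<delta> \<le> max (norm (x + y)) (norm (x - y))"
      using uc unfolding uniformly_convex_def by (meson half_gt_zero)
    have "ereal (gain \<delta>) \<le> delta_phi M r \<phi> TYPE('a) \<epsilon>"
      unfolding delta_phi_def
      using phi_one_plus_gain_le_exp_phi[OF _ \<open>0 < \<delta>\<close>] \<delta> by (intro INF_greatest) force
    then show "0 < delta_phi M r \<phi> TYPE('a) \<epsilon>"
      using gain_pos[OF \<open>0 < \<delta>\<close>] by (meson ereal_less(2) less_le_trans)
  qed
next
  assume delta_pos: "\<forall>\<epsilon>>0. delta_phi M r \<phi> TYPE('a) \<epsilon> > 0"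
  show "uniformly_convex TYPE('a)"
    unfolding uniformly_convex_def
  proof (intro allI impI)
    fix \<epsilon> :: real assume "0 < \<epsilon>"
    then obtain c where "0 < ereal c" and c: "ereal c < delta_phi M r \<phi> TYPE('a) \<epsilon>"
      using delta_pos ereal_dense2 by blast
    then obtain \<eta> where "0 < \<eta>" "\<phi> (1 + \<eta>) < \<phi> 1 + c"
      using exists_phi_one_plus_less by auto
    moreover have "\<phi> 1 + c \<le> exp_phi M r \<phi> x y" if "norm x = 1 \<and> \<epsilon> \<le> norm y" for x y :: 'a
    proof -
      have "delta_phi M r \<phi> TYPE('a) \<epsilon> \<le> ereal (exp_phi M r \<phi> x y - \<phi> 1)"
        unfolding delta_phi_def using that by (intro INF_lower2[of "(x, y)"]) auto
      with c show ?thesis using less_le_trans by fastforce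
    qed
    ultimately show "\<exists>\<delta>>0. \<forall>x y::'a. norm x = 1 \<and> \<epsilon> \<le> norm y \<longrightarrow>
        1 + \<delta> \<le> max (norm (x + y)) (norm (x - y))"
      using max_norm_ge_of_exp_phi_ge by blast
  qed
qed

end

theorem theorem3p1:
  fixes M :: "'b measure" and r :: "'b \<Rightarrow> real" and \<phi> :: "real \<Rightarrow> real"
  assumes "prob_space M"
    and "r \<in> borel_measurable M"
    and "distr M borel r = distr M borel (\<lambda>\<omega>. - r \<omega>)"
    and "esssup M (\<lambda>\<omega>. ereal \<bar>r \<omega>\<bar>) = 1"
    and "strictly_convex_nonneg \<phi>"
    and "mono_on {0..} \<phi>"
    and "\<phi> 0 = 0"
  shows "(\<forall>x::'a::banach. norm x = 1 \<longrightarrow>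
            (extreme_point_ball x \<longleftrightarrow> (\<forall>y. exp_phi M r \<phi> x y = \<phi> 1 \<longrightarrow> y = 0)))
       \<and> (\<forall>x::'a. norm x = 1 \<longrightarrow>
            (strongly_extreme_point_ball x \<longleftrightarrow>
              (\<forall>\<epsilon>>0. \<exists>\<delta>>0. \<forall>y. norm y \<ge> \<epsilon> \<longrightarrow> exp_phi M r \<phi> x y \<ge> \<phi> 1 + \<delta>)))
       \<and> (uniformly_convex TYPE('a) \<longleftrightarrow> (\<forall>\<epsilon>>0. delta_phi M r \<phi> TYPE('a) \<epsilon> > 0))"
proof -
  interpret symmetric_phi_average \<phi> M r
    using assms by (intro symmetric_phi_average.intro strictly_convex_increasing.intro
        symmetric_phi_average_axioms.intro) auto
  show ?thesis
    using extreme_point_ball_iff_exp_phi strongly_extreme_point_ball_iff_exp_phi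
      uniformly_convex_iff_delta_phi_pos by blast
qed

end
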